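(* Let $\mathcal{O}$ be a complete discrete valuation ring with field of fractions $K$. Consider the game of degree $d = 3$ in which Nora and Wanda choose the polynomial coefficients from $\mathcal{O}$. Then Wanda has a winning strategy (whether she moves first or second), i.e. she can always ensure that the final polynomial has a root in $K$.
   Context: The game: Nora and Wanda alternately choose coefficients of $f(x) = a_3 x^3 + a_2 x^2 + a_1 x + a_0$; on each move the current player picks a not-yet-chosen coefficient and assigns it a value in $\mathcal{O}$, subject to $a_3 \neq 0$, $a_0 \neq 0$. After all four coefficients are chosen, Wanda wins if $f$ has a root in $K = \operatorname{Frac}(\mathcal{O})$, and Nora wins otherwise. *)

theory Defs
  imports "HOL-Computational_Algebra.Polynomial" "HOL-Computational_Algebra.Fraction_Field"
begin

definition is_uniformizer :: "'a::idom \<Rightarrow> bool" where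
  "is_uniformizer p \<longleftrightarrow> p \<noteq> 0 \<and> \<not> p dvd 1 \<and>
     (\<forall>x. x \<noteq> 0 \<longrightarrow> (\<exists>u n. u dvd 1 \<and> x = u * p ^ n))"

definition dvr :: "'a::idom itself \<Rightarrow> bool" where
  "dvr _ \<longleftrightarrow> (\<exists>p::'a. is_uniformizer p)"

text \<open>Completeness for the pi-adic topology: every pi-adically Cauchy sequence
(normalised so that consecutive terms agree mod pi^n) converges.\<close>
definition complete_dvr :: "'a::idom itself \<Rightarrow> bool" where
  "complete_dvr T \<longleftrightarrow> dvr T \<and>
     (\<forall>p::'a. is_uniformizer p \<longrightarrow>
        (\<forall>s::nat \<Rightarrow> 'a. (\<forall>n. p ^ n dvd (s (Suc n) - s n)) \<longrightarrow>
           (\<exists>x. \<forall>n. p ^ n dvd (x - s n))))"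

definition cubic :: "(nat \<Rightarrow> 'a::idom) \<Rightarrow> 'a poly" where
  "cubic a = [:a 0, a 1, a 2, a 3:]"

definition has_root_in_frac :: "'a::idom poly \<Rightarrow> bool" where
  "has_root_in_frac f \<longleftrightarrow> (\<exists>x :: 'a fract. poly (map_poly (\<lambda>c. Fract c 1) f) x = 0)"

definition legal_move :: "(nat \<Rightarrow> 'a::idom option) \<Rightarrow> nat \<Rightarrow> 'a \<Rightarrow> bool" where
  "legal_move s i c \<longleftrightarrow> i \<le> 3 \<and> s i = None \<and> ((i = 0 \<or> i = 3) \<longrightarrow> c \<noteq> 0)"

text \<open>wanda_wins k w s: in position s (partial assignment of coefficients) with k moves
remaining, w = True iff it is Wanda's turn, Wanda can force a win.
For a finite game of fixed length this is exactly the existence of a winning strategy.\<close>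
fun wanda_wins :: "nat \<Rightarrow> bool \<Rightarrow> (nat \<Rightarrow> 'a::idom option) \<Rightarrow> bool" where
  "wanda_wins 0 w s = has_root_in_frac (cubic (\<lambda>i. the (s i)))"
| "wanda_wins (Suc k) w s =
     (if w then (\<exists>i c. legal_move s i c \<and> wanda_wins k False (s(i \<mapsto> c)))
      else (\<forall>i c. legal_move s i c \<longrightarrow> wanda_wins k True (s(i \<mapsto> c))))"

end

theory Submission
  imports Defs "HOL-Computational_Algebra.Polynomial_Factorial"
begin

text \<open>
  Let \<open>p\<close> be a uniformizer. Moving second, Wanda makes the last move, and over any
  infinite domain the last move wins: the free coefficient can be chosen to make a prescribed
  point a root, namely \<open>1\<close>, or \<open>r\<close> resp. \<open>1/r\<close> for the constant resp. leading coefficient,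
  where \<open>r \<noteq> 0\<close> avoids the roots of the remaining quadratic so that the forced value is
  nonzero.

  Moving first, Wanda sets \<open>a\<^sub>1 = 1\<close>. If Nora answers with \<open>a\<^sub>0\<close>, Wanda sets \<open>a\<^sub>3 = p\<close>;
  then whatever \<open>a\<^sub>2\<close> is, Hensel's lemma yields a root: of the reversed cubic near \<open>0\<close> if
  \<open>a\<^sub>2\<close> is a unit, and of \<open>f\<close> near \<open>-a\<^sub>0\<close> if \<open>p dvd a\<^sub>2\<close>. If Nora answers with \<open>a\<^sub>2\<close> or
  \<open>a\<^sub>3\<close>, Wanda sets \<open>a\<^sub>0 = p\<close> and Hensel's lemma applies near \<open>0\<close>.
\<close>

lemma sub_dvd_poly_diff:
  fixes f :: "'a::comm_ring_1 poly"
  shows "x - y dvd poly f x - poly f y"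
proof (induction f)
  case (pCons a f)
  have "poly (pCons a f) x - poly (pCons a f) y = (x - y) * poly f x + y * (poly f x - poly f y)"
    by (simp add: algebra_simps)
  then show ?case using pCons.IH by simp
qed simp

lemma uniformizer_nonzero: "is_uniformizer p \<Longrightarrow> p \<noteq> 0"
  and uniformizer_not_unit: "is_uniformizer p \<Longrightarrow> \<not> p dvd 1"
  by (simp_all add: is_uniformizer_def)

lemma unit_if_not_uniformizer_dvd:
  assumes p: "is_uniformizer p" and "\<not> p dvd x"
  shows "x dvd 1"
proof -
  have "x \<noteq> 0"
    using assms(2) by auto
  then obtain u n where u: "u dvd 1" "x = u * p ^ n"
    using p unfolding is_uniformizer_def by blast
  show ?thesis
  proof (cases n)
    case 0
    with u show ?thesis by simp
  next
    case (Suc m)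
    with u have "p dvd x" by simp
    with assms(2) show ?thesis ..
  qed
qed

lemma eq_0_if_uniformizer_powers_dvd:
  assumes p: "is_uniformizer p" and dvd: "\<And>n. p ^ n dvd x"
  shows "x = 0"
proof (rule ccontr)
  assume "x \<noteq> 0"
  then obtain u m where u: "u dvd 1" "x = u * p ^ m"
    using p unfolding is_uniformizer_def by blast
  have "p ^ m * p dvd p ^ m * u"
    using dvd[of "Suc m"] u by (simp add: mult.commute)
  then have "p dvd u"
    using uniformizer_nonzero[OF p] by simp
  with u(1) uniformizer_not_unit[OF p] show False
    using dvd_trans by blast
qed

lemma inj_uniformizer_power:
  assumes p: "is_uniformizer p"
  shows "inj (\<lambda>n::nat. p ^ n)"
proof -
  have neq: "p ^ m \<noteq> p ^ n" if "m < n" for m n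
  proof
    assume "p ^ m = p ^ n"
    moreover have "p ^ n = p ^ m * p ^ (n - m)"
      using that by (simp flip: power_add)
    ultimately have "p ^ (n - m) = 1"
      using uniformizer_nonzero[OF p] by simp
    moreover have "p dvd p ^ (n - m)"
      using that by simp
    ultimately show False
      using uniformizer_not_unit[OF p] by simp
  qed
  show ?thesis
  proof (rule injI)
    fix m n :: nat
    assume "p ^ m = p ^ n"
    with neq[of m n] neq[of n m] show "m = n"
      by (cases m n rule: linorder_cases) auto
  qed
qed

lemma infinite_UNIV_if_uniformizer:
  assumes "is_uniformizer (p::'a::idom)"
  shows "infinite (UNIV :: 'a set)"
  using range_inj_infinite[OF inj_uniformizer_power[OF assms]] by (rule infinite_super[rotated]) simp

lemma complete_dvr_contraction_has_fixed_point:
  fixes T :: "'a::idom \<Rightarrow> 'a"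
  assumes complete: "complete_dvr TYPE('a)" and p: "is_uniformizer p"
    and maps: "\<And>x. p dvd x \<Longrightarrow> p dvd T x"
    and contracts: "\<And>x y. p dvd x \<Longrightarrow> p dvd y \<Longrightarrow> p * (x - y) dvd T x - T y"
  shows "\<exists>x. T x = x"
proof -
  define s where "s n = (T ^^ n) 0" for n
  have s_Suc: "s (Suc n) = T (s n)" for n
    by (simp add: s_def)
  have p_dvd_s: "p dvd s n" for n
    by (induction n) (simp_all add: s_def maps)
  have cauchy: "p ^ n dvd s (Suc n) - s n" for n
  proof (induction n)
    case (Suc n)
    then have "p * p ^ n dvd p * (s (Suc n) - s n)"
      by (rule mult_dvd_mono[OF dvd_refl])
    also have "\<dots> dvd T (s (Suc n)) - T (s n)"
      by (rule contracts[OF p_dvd_s p_dvd_s])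
    finally show ?case by (simp add: s_Suc)
  qed simp
  then obtain x where lim: "\<And>n. p ^ n dvd x - s n"
    using complete p unfolding complete_dvr_def by blast
  have "p dvd x"
    using lim[of 1] p_dvd_s[of 1] by (metis dvd_add diff_add_cancel power_one_right)
  have "p ^ n dvd T x - x" for n
  proof -
    have "p * p ^ n dvd p * (x - s n)"
      using lim by (rule mult_dvd_mono[OF dvd_refl])
    also have "\<dots> dvd T x - T (s n)"
      by (rule contracts[OF \<open>p dvd x\<close> p_dvd_s])
    finally have "p * p ^ n dvd T x - s (Suc n)"
      by (simp add: s_Suc)
    moreover have "p * p ^ n dvd s (Suc n) - x"
      using lim[of "Suc n"] by (subst minus_diff_eq[symmetric], subst dvd_minus_iff) simp
    ultimately have "p * p ^ n dvd (T x - s (Suc n)) + (s (Suc n) - x)"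
      by (rule dvd_add)
    also have "\<dots> = T x - x"
      by simp
    finally show ?thesis
      by (rule dvd_mult_right)
  qed
  then have "T x - x = 0"
    by (rule eq_0_if_uniformizer_powers_dvd[OF p])
  then show ?thesis by auto
qed

lemma hensel_lemma_at_0:
  fixes f :: "'a::idom poly"
  assumes complete: "complete_dvr TYPE('a)" and p: "is_uniformizer p"
    and "p dvd coeff f 0" and "coeff f 1 dvd 1"
  shows "\<exists>x. poly f x = 0"
proof -
  obtain a0 a1 g where f: "f = pCons a0 (pCons a1 g)"
    by (metis pCons_cases)
  with assms have "p dvd a0" "a1 dvd 1" by simp_all
  then obtain b where b: "a1 * b = 1"
    by (metis dvdE)
  \<comment> \<open>Newton's map with the derivative frozen at \<open>0\<close>\<close>
  define newton where "newton x = x - b * poly f x" for x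
  have "p dvd newton x" if "p dvd x" for x
    unfolding newton_def f using that \<open>p dvd a0\<close> by simp
  moreover have "p * (x - y) dvd newton x - newton y" if "p dvd x" "p dvd y" for x y
  proof -
    have "newton x - newton y = (1 - a1 * b) * (x - y)
        - b * (x * (x * (poly g x - poly g y)) + (x - y) * ((x + y) * poly g y))"
      unfolding newton_def f by (simp add: algebra_simps)
    then have "newton x - newton y =
        - b * (x * (x * (poly g x - poly g y)) + (x - y) * ((x + y) * poly g y))"
      using b by simp
    moreover have "p * (x - y) dvd x * (poly g x - poly g y)"
      using that(1) sub_dvd_poly_diff by (rule mult_dvd_mono)
    moreover have "p dvd (x + y) * poly g y"
      using that by simp
    ultimately show ?thesis
      by (simp add: mult.commute[of p])
  qed
  ultimately obtain x where "newton x = x"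
    using complete_dvr_contraction_has_fixed_point[OF complete p] by metis
  then have "b * poly f x = 0"
    by (simp add: newton_def)
  then show ?thesis
    using b by auto
qed

lemma hensel_lemma:
  fixes f :: "'a::idom poly"
  assumes complete: "complete_dvr TYPE('a)" and p: "is_uniformizer p"
    and "p dvd poly f x0" and "poly (pderiv f) x0 dvd 1"
  shows "\<exists>x. poly f x = 0"
proof -
  define g where "g = pcompose f [:x0, 1:]"
  have "coeff g 0 = poly f x0"
    by (simp flip: poly_0_coeff_0 add: g_def poly_pcompose)
  moreover have "coeff g 1 = poly (pderiv f) x0"
    using coeff_pderiv[of g 0]
    by (simp flip: poly_0_coeff_0 add: g_def pderiv_pcompose poly_pcompose pderiv_pCons)
  ultimately obtain y where "poly g y = 0"
    using hensel_lemma_at_0[OF complete p, of g] assms by auto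
  then show ?thesis
    by (auto simp: g_def poly_pcompose)
qed

lemma poly_fract_poly: "poly (fract_poly f) (to_fract x) = to_fract (poly f x)"
  by (induction f) (simp_all add: map_poly_pCons)

lemma has_root_in_frac_iff: "has_root_in_frac f \<longleftrightarrow> (\<exists>x. poly (fract_poly f) x = 0)"
  by (simp add: has_root_in_frac_def to_fract_def[abs_def])

lemma has_root_in_frac_if_root: "poly f x = 0 \<Longrightarrow> has_root_in_frac f"
  unfolding has_root_in_frac_iff by (metis poly_fract_poly to_fract_0)

lemma fract_poly_reflect_poly: "fract_poly (reflect_poly f) = reflect_poly (fract_poly f)"
  by (simp add: poly_eq_iff coeff_map_poly coeff_reflect_poly degree_map_poly)

lemma has_root_in_frac_if_reflect_poly_root:
  assumes "poly (reflect_poly f) u = 0" "u \<noteq> 0"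
  shows "has_root_in_frac f"
proof -
  have "poly (reflect_poly (fract_poly f)) (to_fract u) = 0"
    using assms(1) by (simp flip: fract_poly_reflect_poly add: poly_fract_poly)
  then have "poly (fract_poly f) (inverse (to_fract u)) = 0"
    using assms(2) by (simp add: poly_reflect_poly_nz)
  then show ?thesis
    unfolding has_root_in_frac_iff by blast
qed

lemma reflect_poly_cubic: "a 3 \<noteq> 0 \<Longrightarrow> reflect_poly (cubic a) = [:a 3, a 2, a 1, a 0:]"
  by (simp add: cubic_def reflect_poly_def)

lemma cubic_has_root_if_unit_linear_coeff:
  assumes complete: "complete_dvr TYPE('a::idom)" and p: "is_uniformizer (p::'a)"
    and "a 1 dvd 1" and "p dvd a 0"
  shows "has_root_in_frac (cubic a)"
  using hensel_lemma_at_0[OF complete p, of "cubic a"] assms(3,4)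
  by (auto simp: cubic_def intro: has_root_in_frac_if_root)

lemma cubic_has_root_if_linear_coeff_1_leading_uniformizer:
  assumes complete: "complete_dvr TYPE('a::idom)" and p: "is_uniformizer (p::'a)"
    and a: "a 1 = 1" "a 3 = p"
  shows "has_root_in_frac (cubic a)"
proof (cases "a 2 dvd 1")
  case True
  have reflect: "reflect_poly (cubic a) = [:p, a 2, a 1, a 0:]"
    using a uniformizer_nonzero[OF p] by (simp add: reflect_poly_cubic)
  obtain u where "poly (reflect_poly (cubic a)) u = 0"
    using hensel_lemma_at_0[OF complete p, of "reflect_poly (cubic a)"] True
    unfolding reflect by auto
  moreover have "u \<noteq> 0"
    using calculation uniformizer_nonzero[OF p] unfolding reflect by auto
  ultimately show ?thesis
    by (rule has_root_in_frac_if_reflect_poly_root)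
next
  case False
  then obtain d where d: "a 2 = p * d"
    using unit_if_not_uniformizer_dvd[OF p] by blast
  have "poly (cubic a) (- a 0) = p * (d * a 0 ^ 2 - a 0 ^ 3)"
    using a d by (simp add: cubic_def algebra_simps power2_eq_square power3_eq_cube)
  moreover have "poly (pderiv (cubic a)) (- a 0) = 1 + p * (3 * a 0 ^ 2 - 2 * d * a 0)"
    using a d by (simp add: cubic_def pderiv_pCons algebra_simps power2_eq_square)
  moreover have "\<not> p dvd 1 + p * k" for k
    using uniformizer_not_unit[OF p] by (simp add: dvd_add_left_iff)
  ultimately obtain x where "poly (cubic a) x = 0"
    using hensel_lemma[OF complete p, of "cubic a" "- a 0"] unit_if_not_uniformizer_dvd[OF p] by auto
  then show ?thesis
    by (rule has_root_in_frac_if_root)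
qed

definition free_coeffs :: "(nat \<Rightarrow> 'a option) \<Rightarrow> nat set" where
  "free_coeffs s = {i. i \<le> 3 \<and> s i = None}"

definition admissible :: "(nat \<Rightarrow> 'a::zero option) \<Rightarrow> bool" where
  "admissible s \<longleftrightarrow> s 0 \<noteq> Some 0 \<and> s 3 \<noteq> Some 0"

lemma finite_free_coeffs: "finite (free_coeffs s)"
  by (simp add: free_coeffs_def)

lemma legal_move_iff: "legal_move s i c \<longleftrightarrow> i \<in> free_coeffs s \<and> ((i = 0 \<or> i = 3) \<longrightarrow> c \<noteq> 0)"
  by (auto simp: legal_move_def free_coeffs_def)

lemma free_coeffs_upd: "free_coeffs (s(i \<mapsto> c)) = free_coeffs s - {i}"
  by (auto simp: free_coeffs_def)

lemma admissible_upd: "admissible s \<Longrightarrow> legal_move s i c \<Longrightarrow> admissible (s(i \<mapsto> c))"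
  by (auto simp: admissible_def legal_move_def)

lemma ex_nonzero_non_root:
  fixes q :: "'a::idom poly"
  assumes "infinite (UNIV :: 'a set)" and "q \<noteq> 0"
  shows "\<exists>r. r \<noteq> 0 \<and> poly q r \<noteq> 0"
proof -
  have "finite (insert 0 {x. poly q x = 0})"
    using poly_roots_finite[OF assms(2)] by simp
  from ex_new_if_finite[OF assms(1) this] show ?thesis
    by auto
qed

lemma cubic_has_root_for_some_coeff:
  assumes inf: "infinite (UNIV :: 'a::idom set)" and "j \<le> 3"
    and a0: "j \<noteq> 0 \<Longrightarrow> a 0 \<noteq> 0" and a3: "j \<noteq> 3 \<Longrightarrow> a 3 \<noteq> (0::'a)"
  shows "\<exists>c. ((j = 0 \<or> j = 3) \<longrightarrow> c \<noteq> 0) \<and> has_root_in_frac (cubic (a(j := c)))"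
proof -
  consider "j = 0" | "j = 1" | "j = 2" | "j = 3"
    using \<open>j \<le> 3\<close> by arith
  then show ?thesis
  proof cases
    case 1
    obtain r where r: "r \<noteq> 0" "poly [:a 1, a 2, a 3:] r \<noteq> 0"
      using ex_nonzero_non_root[OF inf, of "[:a 1, a 2, a 3:]"] a3 1 by auto
    show ?thesis
      using 1 r
      by (intro exI[of _ "- r * poly [:a 1, a 2, a 3:] r"] conjI impI has_root_in_frac_if_root[of _ r])
        (auto simp: cubic_def)
  next
    case 2
    show ?thesis
      using 2 by (intro exI[of _ "- (a 0 + a 2 + a 3)"] conjI impI has_root_in_frac_if_root[of _ 1])
        (auto simp: cubic_def)
  next
    case 3
    show ?thesis
      using 3 by (intro exI[of _ "- (a 0 + a 1 + a 3)"] conjI impI has_root_in_frac_if_root[of _ 1])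
        (auto simp: cubic_def)
  next
    case 4
    obtain r where r: "r \<noteq> 0" "poly [:a 2, a 1, a 0:] r \<noteq> 0"
      using ex_nonzero_non_root[OF inf, of "[:a 2, a 1, a 0:]"] a0 4 by auto
    show ?thesis
      using 4 r
      by (intro exI[of _ "- r * poly [:a 2, a 1, a 0:] r"] conjI impI
          has_root_in_frac_if_reflect_poly_root[of _ r])
        (auto simp: reflect_poly_cubic)
  qed
qed

lemma wanda_wins_last_move:
  assumes inf: "infinite (UNIV :: 'a::idom set)"
    and adm: "admissible s" and free: "free_coeffs s = {j}"
  shows "wanda_wins (Suc 0) True (s :: nat \<Rightarrow> 'a option)"
proof -
  define a where "a i = the (s i)" for i
  have "j \<le> 3"
    using free by (auto simp: free_coeffs_def)
  moreover have "a 0 \<noteq> 0" if "j \<noteq> 0"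
    using adm free that unfolding a_def admissible_def free_coeffs_def by (cases "s 0") auto
  moreover have "a 3 \<noteq> 0" if "j \<noteq> 3"
    using adm free that unfolding a_def admissible_def free_coeffs_def by (cases "s 3") auto
  ultimately obtain c where c: "(j = 0 \<or> j = 3) \<longrightarrow> c \<noteq> 0" "has_root_in_frac (cubic (a(j := c)))"
    using cubic_has_root_for_some_coeff[OF inf] by blast
  have "legal_move s j c"
    using free c(1) by (simp add: legal_move_iff)
  moreover have "(\<lambda>i. the ((s(j \<mapsto> c)) i)) = a(j := c)"
    by (auto simp: a_def)
  ultimately show ?thesis
    using c(2) by (simp only: wanda_wins.simps if_True) metis
qed

lemma wanda_wins_if_moving_last:
  assumes inf: "infinite (UNIV :: 'a::idom set)"
  shows "admissible s \<Longrightarrow> card (free_coeffs s) = k \<Longrightarrow> 0 < k \<Longrightarrow> (w \<longleftrightarrow> odd k) \<Longrightarrow>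
    wanda_wins k w (s :: nat \<Rightarrow> 'a option)"
proof (induction k arbitrary: s w)
  case (Suc k)
  show ?case
  proof (cases "k = 0")
    case True
    with Suc.prems obtain j where "free_coeffs s = {j}" "w"
      by (auto simp: card_Suc_eq)
    then show ?thesis
      using wanda_wins_last_move[OF inf \<open>admissible s\<close>] True by simp
  next
    case False
    have after_move: "wanda_wins k (\<not> w) (s(i \<mapsto> c))" if move: "legal_move s i c" for i c
    proof -
      have "admissible (s(i \<mapsto> c))"
        using Suc.prems(1) move by (rule admissible_upd)
      moreover have "card (free_coeffs (s(i \<mapsto> c))) = k"
        using Suc.prems(2) move by (simp add: free_coeffs_upd finite_free_coeffs legal_move_iff)
      ultimately show ?thesis
        by (rule Suc.IH) (use False Suc.prems(4) in auto)
    qed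
    show ?thesis
    proof (cases w)
      case True
      obtain i where "i \<in> free_coeffs s"
        using Suc.prems(2) by (metis card.empty ex_in_conv nat.distinct(1))
      then have "legal_move s i 1"
        by (simp add: legal_move_iff)
      with after_move True show ?thesis
        by auto
    next
      case False
      with after_move show ?thesis
        by simp
    qed
  qed
qed simp

lemma wanda_wins_if_completions_have_root:
  assumes "\<And>a. (\<And>i. s i \<noteq> None \<Longrightarrow> a i = the (s i)) \<Longrightarrow> has_root_in_frac (cubic a)"
  shows "wanda_wins (Suc 0) False s"
proof -
  have "has_root_in_frac (cubic (\<lambda>j. the ((s(i \<mapsto> c)) j)))" if "legal_move s i c" for i c
    by (rule assms) (use that in \<open>auto simp: legal_move_def\<close>)
  then show ?thesis
    by simp
qed

lemma wanda_wins_moving_first: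
  assumes complete: "complete_dvr TYPE('a::idom)" and p: "is_uniformizer (p::'a)"
  shows "wanda_wins 4 True (Map.empty :: nat \<Rightarrow> 'a option)"
proof -
  define s1 :: "nat \<Rightarrow> 'a option" where "s1 = [1 \<mapsto> 1]"
  have "wanda_wins (Suc (Suc 0)) True (s1(i \<mapsto> c))" if move: "legal_move s1 i c" for i c
  proof -
    have "i \<noteq> 1"
      using move by (auto simp: legal_move_def s1_def split: if_splits)
    show ?thesis
    proof (cases "i = 0")
      case True
      have "legal_move (s1(i \<mapsto> c)) 3 p"
        using True uniformizer_nonzero[OF p] by (simp add: legal_move_def s1_def)
      moreover have "wanda_wins (Suc 0) False (s1(i \<mapsto> c, 3 \<mapsto> p))"
        by (rule wanda_wins_if_completions_have_root,
            rule cubic_has_root_if_linear_coeff_1_leading_uniformizer[OF complete p])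
          (use True in \<open>simp_all add: s1_def\<close>)
      ultimately show ?thesis
        by auto
    next
      case False
      have "legal_move (s1(i \<mapsto> c)) 0 p"
        using False uniformizer_nonzero[OF p] by (simp add: legal_move_def s1_def)
      moreover have "wanda_wins (Suc 0) False (s1(i \<mapsto> c, 0 \<mapsto> p))"
        by (rule wanda_wins_if_completions_have_root,
            rule cubic_has_root_if_unit_linear_coeff[OF complete p])
          (use \<open>i \<noteq> 1\<close> in \<open>simp_all add: s1_def\<close>)
      ultimately show ?thesis
        by auto
    qed
  qed
  then have "wanda_wins (Suc (Suc (Suc 0))) False s1"
    by simp
  moreover have "legal_move Map.empty 1 (1::'a)"
    by (simp add: legal_move_def)
  ultimately show ?thesis
    by (auto simp: numeral_eq_Suc s1_def)
qed

theorem proposition3: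
  assumes "complete_dvr TYPE('a::idom)"
  shows "wanda_wins 4 True (Map.empty :: nat \<Rightarrow> 'a option)
       \<and> wanda_wins 4 False (Map.empty :: nat \<Rightarrow> 'a option)"
proof -
  obtain p :: 'a where p: "is_uniformizer p"
    using assms unfolding complete_dvr_def dvr_def by blast
  have "free_coeffs (Map.empty :: nat \<Rightarrow> 'a option) = {0..3}"
    by (auto simp: free_coeffs_def)
  then have "wanda_wins 4 False (Map.empty :: nat \<Rightarrow> 'a option)"
    using infinite_UNIV_if_uniformizer[OF p]
    by (intro wanda_wins_if_moving_last) (auto simp: admissible_def)
  with wanda_wins_moving_first[OF assms p] show ?thesis
    by blast
qed

end
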